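(* Let $q\in\mathbb{C}^\times$ be not a root of unity. The map $\mathbf{u}^{\langle0\rangle}:\mathbb{C}[x]^{\langle0\rangle}\to\mathbb{C}^\times\times\prod_{t>0}\mathbb{C}$ is injective.
   Context: $[k]=(q^k-q^{-k})/(q-q^{-1})$. $p_t(q)(x_1,\dots,x_k)=\sum_{\lambda\vdash t,\ell(\lambda)\le k}q^{-\ell(\lambda)}(q-q^{-1})^{\ell(\lambda)-1}m_\lambda(x_1,\dots,x_k)$ ($m_\lambda$ the monomial symmetric polynomial, $\ell(\lambda)$ the number of nonzero parts). $\mathbb{C}[x]^{\langle0\rangle}$ is the set of polynomials $\varphi=\beta_\varphi(x-\gamma_1)\cdots(x-\gamma_k)\in\mathbb{C}[x]$ whose leading coefficient $\beta_\varphi$ equals $\pm1$, and $\mathbf{u}^{\langle0\rangle}(\varphi)=(\beta_\varphi,(0)_{t>0})$ if $k=0$, $(\beta_\varphi q^k,(p_t(q)(\gamma_1,\dots,\gamma_k))_{t>0})$ if $k>0$. *)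

theory Defs
  imports Complex_Main "HOL-Computational_Algebra.Polynomial" "HOL-Library.Multiset"
begin

definition partitions_of :: "nat \<Rightarrow> nat multiset set" where
  "partitions_of t = {la. (\<forall>a\<in>#la. 0 < a) \<and> sum_mset la = t}"

definition monomial_sym :: "nat multiset \<Rightarrow> complex list \<Rightarrow> complex" where
  "monomial_sym la xs =
     (\<Sum>\<alpha>\<in>{\<alpha>::nat list. length \<alpha> = length xs \<and> mset (filter (\<lambda>a. a \<noteq> 0) \<alpha>) = la}.
        \<Prod>i<length xs. (xs ! i) ^ (\<alpha> ! i))"

definition p_q :: "complex \<Rightarrow> nat \<Rightarrow> complex list \<Rightarrow> complex" where
  "p_q q t xs =
     (\<Sum>la\<in>{la\<in>partitions_of t. size la \<le> length xs}.
        q powi (- int (size la)) * (q - inverse q) ^ (size la - 1) * monomial_sym la xs)"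

definition root_list :: "complex poly \<Rightarrow> complex list" where
  "root_list \<phi> = (SOME gs. \<phi> = smult (lead_coeff \<phi>) (\<Prod>g\<leftarrow>gs. [:-g, 1:]))"

definition Cx0 :: "complex poly set" where
  "Cx0 = {\<phi>. lead_coeff \<phi> = 1 \<or> lead_coeff \<phi> = -1}"

text \<open>u^<0>; the component t = 0 (not part of the product over t>0) is set to 0.\<close>
definition u0 :: "complex \<Rightarrow> complex poly \<Rightarrow> complex \<times> (nat \<Rightarrow> complex)" where
  "u0 q \<phi> = (let \<beta> = lead_coeff \<phi>; gs = root_list \<phi>; k = length gs in
     if k = 0 then (\<beta>, \<lambda>t. 0)
     else (\<beta> * q ^ k, \<lambda>t. if t = 0 then 0 else p_q q t gs))"

definition root_of_unity :: "complex \<Rightarrow> bool" where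
  "root_of_unity q \<longleftrightarrow> (\<exists>n>0. q ^ n = 1)"

end

(*
  Write P(z) = prod_i (1 - g_i z) for the roots g_i of phi. With d = q^-1 (q - q^-1) one has
  1 + d * sum_(a>0) (x z)^a = (1 - q^-2 x z) / (1 - x z), and expanding the product of these series
  over the roots gives 1 + (q - q^-1) * sum_(t>0) p_t(q)(g) z^t = P(q^-2 z) / P(z).
  So equal p_t-components give P(c z) Q(z) = Q(c z) P(z) with c = q^-2 not a root of unity; after
  cancelling gcd(P, Q), each coprime cofactor divides its own dilation, hence is fixed by z -> c z
  and therefore constant, so P = Q. The first component beta q^k determines k and beta = +-1
  because q is not a root of unity, and P together with k recovers the monic factor of phi.
*)
theory Submission
  imports Defs "HOL-Computational_Algebra.Fundamental_Theorem_Algebra"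
    "HOL-Computational_Algebra.Polynomial_FPS" "HOL-Computational_Algebra.Polynomial_Factorial"
    "HOL-Computational_Algebra.Field_as_Ring"
begin

unbundle fps_syntax

section \<open>Polynomials invariant under a dilation\<close>

lemma pcompose_dilation_fixed_imp_const:
  fixes p :: "'a::idom poly"
  assumes fixed: "pcompose p [:0, c:] = p" and no_root: "\<And>k. k > 0 \<Longrightarrow> c ^ k \<noteq> 1"
  shows "p = [:coeff p 0:]"
proof (rule poly_eqI)
  fix n
  have "c ^ n * coeff p n = coeff p n"
    using coeff_pcompose_linear[of p c n] by (simp add: fixed)
  then have "n = 0 \<or> coeff p n = 0"
    using no_root[of n] by (metis mult_cancel_right2 neq0_conv)
  then show "coeff p n = coeff [:coeff p 0:] n"
    by (auto simp: coeff_pCons split: nat.split)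
qed

text \<open>Coprimality makes A divide its own dilation A(cz); comparing degrees and constant terms,
  the two are equal.\<close>
lemma coprime_dilation_cross_eq_imp_const:
  fixes A B :: "'a::field_gcd poly"
  assumes cross: "pcompose A [:0, c:] * B = pcompose B [:0, c:] * A"
    and "coprime A B" and "c \<noteq> 0" and no_root: "\<And>k. k > 0 \<Longrightarrow> c ^ k \<noteq> 1"
    and A0: "poly A 0 \<noteq> 0"
  shows "A = [:coeff A 0:]"
proof -
  have "A dvd pcompose A [:0, c:] * B" unfolding cross by simp
  with \<open>coprime A B\<close> have "A dvd pcompose A [:0, c:]" by (simp add: coprime_dvd_mult_left_iff)
  then obtain k where k: "pcompose A [:0, c:] = A * k" by (elim dvdE)
  have "A \<noteq> 0" using A0 by auto
  moreover have "pcompose A [:0, c:] \<noteq> 0"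
    using pcompose_eq_0[of A "[:0, c:]"] \<open>A \<noteq> 0\<close> \<open>c \<noteq> 0\<close> by auto
  moreover have "degree (pcompose A [:0, c:]) = degree A"
    using \<open>c \<noteq> 0\<close> by (simp add: degree_pcompose)
  ultimately have "degree k = 0" using k by (auto simp: degree_mult_eq)
  then obtain \<kappa> where \<kappa>: "k = [:\<kappa>:]" by (metis degree_eq_zeroE)
  have "poly A 0 * \<kappa> = poly A 0"
    using arg_cong[OF k, of "\<lambda>p. poly p 0"] by (simp add: \<kappa> poly_pcompose)
  with A0 have "pcompose A [:0, c:] = A" by (simp add: k \<kappa>)
  then show ?thesis using no_root by (rule pcompose_dilation_fixed_imp_const)
qed

text \<open>Cancel the gcd and apply the coprime case to both cofactors.\<close>
lemma dilation_cross_eq_imp_eq: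
  fixes A B :: "'a::field_gcd poly"
  assumes cross: "pcompose A [:0, c:] * B = pcompose B [:0, c:] * A"
    and c: "c \<noteq> 0" "\<And>k. k > 0 \<Longrightarrow> c ^ k \<noteq> 1" and A0: "poly A 0 = 1" and B0: "poly B 0 = 1"
  shows "A = B"
proof -
  define g where "g = gcd A B"
  have "g \<noteq> 0" using A0 by (auto simp: g_def)
  then obtain A' B' where AB: "A = A' * g" "B = B' * g" and "coprime A' B'"
    unfolding g_def using gcd_coprime_exists by blast
  have "pcompose g [:0, c:] * g \<noteq> 0"
    using pcompose_eq_0[of g "[:0, c:]"] \<open>g \<noteq> 0\<close> c(1) by auto
  moreover have "(pcompose A' [:0, c:] * B') * (pcompose g [:0, c:] * g) =
      (pcompose B' [:0, c:] * A') * (pcompose g [:0, c:] * g)"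
    using cross by (simp add: AB pcompose_mult algebra_simps)
  ultimately have cross': "pcompose A' [:0, c:] * B' = pcompose B' [:0, c:] * A'" by simp
  have g0: "poly A' 0 * poly g 0 = 1" "poly B' 0 * poly g 0 = 1"
    using A0 B0 by (simp_all add: AB)
  then have "poly A' 0 \<noteq> 0" "poly B' 0 \<noteq> 0" "poly g 0 \<noteq> 0" by auto
  with g0 have "poly A' 0 = poly B' 0" by (metis mult_cancel_right)
  have "A' = [:coeff A' 0:]"
    using coprime_dilation_cross_eq_imp_const[OF cross' \<open>coprime A' B'\<close> c \<open>poly A' 0 \<noteq> 0\<close>] .
  moreover have "B' = [:coeff B' 0:]"
    using coprime_dilation_cross_eq_imp_const[OF cross'[symmetric] _ c \<open>poly B' 0 \<noteq> 0\<close>]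
      \<open>coprime A' B'\<close> by (simp add: ac_simps)
  moreover note \<open>poly A' 0 = poly B' 0\<close>
  ultimately have "A' = B'" by (metis poly_0_coeff_0)
  then show ?thesis by (simp add: AB)
qed

section \<open>The generating function of the p_t(q)\<close>

definition geom_fps :: "'a::comm_ring_1 \<Rightarrow> 'a \<Rightarrow> 'a fps" where
  "geom_fps d x = Abs_fps (\<lambda>a. (if a = 0 then 1 else d) * x ^ a)"

definition reciprocal_root_poly :: "'a::comm_ring_1 list \<Rightarrow> 'a poly" where
  "reciprocal_root_poly xs = (\<Prod>x\<leftarrow>xs. [:1, -x:])"

lemma geom_fps_nth [simp]: "geom_fps d x $ a = (if a = 0 then 1 else d) * x ^ a"
  by (simp add: geom_fps_def)

lemma linear_times_geom_fps:
  "fps_of_poly [:1, -x:] * geom_fps d x = fps_of_poly [:1, -((1 - d) * x):]"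
proof (rule fps_ext)
  fix n
  have coeff: "(fps_of_poly [:1, -y:] * F) $ n = F $ n - (if n = 0 then 0 else y * F $ (n - 1))"
    for y and F :: "'a fps"
  proof -
    have "fps_of_poly [:1, -y:] = 1 - fps_const y * fps_X"
      by (simp add: fps_of_poly_pCons fps_eq_iff)
    then have "fps_of_poly [:1, -y:] * F = F - fps_const y * (fps_X * F)"
      by (simp only: left_diff_distrib mult_1_left mult.assoc)
    then show ?thesis by (simp del: fps_X_mult_nth add: fps_X_mult_nth[of F])
  qed
  show "(fps_of_poly [:1, -x:] * geom_fps d x) $ n = fps_of_poly [:1, -((1 - d) * x):] $ n"
    unfolding coeff by (cases n) (auto simp: coeff_pCons algebra_simps split: nat.split)
qed

lemma pcompose_reciprocal_root_poly:
  "pcompose (reciprocal_root_poly xs) [:0, c:] = reciprocal_root_poly (map ((*) c) xs)"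
proof (induction xs)
  case (Cons x xs)
  have "pcompose [:1, -x:] [:0, c:] = [:1, -(c * x):]"
    by (simp add: pcompose_pCons mult.commute)
  with Cons.IH show ?case by (simp only: reciprocal_root_poly_def list.map prod_list.Cons pcompose_mult)
qed (simp add: reciprocal_root_poly_def one_pCons pcompose_pCons)

lemma reciprocal_root_poly_times_prod_geom_fps:
  "fps_of_poly (reciprocal_root_poly xs) * (\<Prod>x\<leftarrow>xs. geom_fps d x) =
     fps_of_poly (reciprocal_root_poly (map ((*) (1 - d)) xs))"
proof (induction xs)
  case (Cons x xs)
  have "fps_of_poly (reciprocal_root_poly (x # xs)) * (\<Prod>x\<leftarrow>x # xs. geom_fps d x) =
      (fps_of_poly [:1, -x:] * geom_fps d x) *
      (fps_of_poly (reciprocal_root_poly xs) * (\<Prod>x\<leftarrow>xs. geom_fps d x))"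
    by (simp only: reciprocal_root_poly_def list.map prod_list.Cons fps_of_poly_mult ac_simps)
  also have "\<dots> =
      fps_of_poly [:1, -((1 - d) * x):] * fps_of_poly (reciprocal_root_poly (map ((*) (1 - d)) xs))"
    by (simp only: Cons.IH linear_times_geom_fps)
  also have "\<dots> = fps_of_poly (reciprocal_root_poly (map ((*) (1 - d)) (x # xs)))"
    by (simp add: reciprocal_root_poly_def fps_of_poly_mult)
  finally show ?case .
qed (simp add: reciprocal_root_poly_def)

lemma poly_reciprocal_root_poly0 [simp]: "poly (reciprocal_root_poly xs) 0 = 1"
  by (induction xs) (simp_all add: reciprocal_root_poly_def)

lemma poly_root_prod_eq_reciprocal:
  fixes z :: "'a::field"
  assumes "z \<noteq> 0"
  shows "poly (\<Prod>x\<leftarrow>xs. [:-x, 1:]) z = z ^ length xs * poly (reciprocal_root_poly xs) (inverse z)"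
  using assms by (induction xs) (simp_all add: reciprocal_root_poly_def field_simps)

lemma root_prod_eq_if_reciprocal_root_poly_eq:
  fixes xs ys :: "'a::field_char_0 list"
  assumes "length xs = length ys" and "reciprocal_root_poly xs = reciprocal_root_poly ys"
  shows "(\<Prod>x\<leftarrow>xs. [:-x, 1:]) = (\<Prod>x\<leftarrow>ys. [:-x, 1:])" (is "?P = ?Q")
proof (rule ccontr)
  assume "?P \<noteq> ?Q"
  then have "finite {z. poly (?P - ?Q) z = 0}" by (intro poly_roots_finite) simp
  moreover have "- {0} \<subseteq> {z. poly (?P - ?Q) z = 0}"
    using assms by (auto simp: poly_root_prod_eq_reciprocal)
  moreover have "infinite (- {0::'a})"
    unfolding Compl_eq_Diff_UNIV by (rule Diff_infinite_finite) (simp_all add: infinite_UNIV_char_0)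
  ultimately show False by (metis finite_subset)
qed

definition weak_compositions :: "nat \<Rightarrow> nat \<Rightarrow> nat list set" where
  "weak_compositions n t = {\<alpha>. length \<alpha> = n \<and> sum_list \<alpha> = t}"

definition partition_of :: "nat list \<Rightarrow> nat multiset" where
  "partition_of \<alpha> = mset (filter (\<lambda>a. a \<noteq> 0) \<alpha>)"

definition list_monomial :: "'a::comm_monoid_mult list \<Rightarrow> nat list \<Rightarrow> 'a" where
  "list_monomial xs \<alpha> = (\<Prod>i<length xs. xs ! i ^ (\<alpha> ! i))"

lemma list_monomial_Cons [simp]: "list_monomial (x # xs) (a # \<alpha>) = x ^ a * list_monomial xs \<alpha>"
  by (simp del: prod.lessThan_Suc add: list_monomial_def prod.lessThan_Suc_shift)

lemma partition_of_Nil [simp]: "partition_of [] = {#}"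
  by (simp add: partition_of_def)

lemma partition_of_Cons [simp]:
  "partition_of (a # \<alpha>) = (if a = 0 then partition_of \<alpha> else add_mset a (partition_of \<alpha>))"
  by (simp add: partition_of_def)

lemma sum_mset_partition_of [simp]: "sum_mset (partition_of \<alpha>) = sum_list \<alpha>"
  by (induction \<alpha>) auto

lemma size_partition_of_le: "size (partition_of \<alpha>) \<le> length \<alpha>"
  by (induction \<alpha>) auto

lemma in_partition_of_pos: "a \<in># partition_of \<alpha> \<Longrightarrow> 0 < a"
  by (simp add: partition_of_def)

lemma finite_weak_compositions: "finite (weak_compositions n t)"
proof (rule finite_subset)
  show "weak_compositions n t \<subseteq> {\<alpha>. set \<alpha> \<subseteq> {..t} \<and> length \<alpha> = n}"
    by (auto simp: weak_compositions_def member_le_sum_list)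
qed (simp add: finite_lists_length_eq)

lemma weak_compositions_Suc:
  "weak_compositions (Suc n) t = (\<lambda>(a, \<beta>). a # \<beta>) ` (SIGMA a:{0..t}. weak_compositions n (t - a))"
proof safe
  fix \<alpha> assume "\<alpha> \<in> weak_compositions (Suc n) t"
  then obtain a \<beta> where "\<alpha> = a # \<beta>" "length \<beta> = n" "a + sum_list \<beta> = t"
    by (cases \<alpha>) (auto simp: weak_compositions_def)
  then show "\<alpha> \<in> (\<lambda>(a, \<beta>). a # \<beta>) ` (SIGMA a:{0..t}. weak_compositions n (t - a))"
    by (auto simp: weak_compositions_def image_iff)
qed (auto simp: weak_compositions_def)

lemma coeff_prod_geom_fps:
  "(\<Prod>x\<leftarrow>xs. geom_fps d x) $ t =
     (\<Sum>\<alpha>\<in>weak_compositions (length xs) t. d ^ size (partition_of \<alpha>) * list_monomial xs \<alpha>)"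
proof (induction xs arbitrary: t)
  case Nil
  have "weak_compositions 0 t = (if t = 0 then {[]} else {})"
    by (auto simp: weak_compositions_def)
  then show ?case by (simp add: list_monomial_def)
next
  case (Cons x xs)
  define f where "f \<alpha> = d ^ size (partition_of \<alpha>) * list_monomial (x # xs) \<alpha>" for \<alpha>
  have "(\<Prod>x\<leftarrow>x # xs. geom_fps d x) $ t =
      (\<Sum>a=0..t. \<Sum>\<beta>\<in>weak_compositions (length xs) (t - a). f (a # \<beta>))"
    unfolding fps_mult_nth prod_list.Cons list.map Cons.IH sum_distrib_left
    by (intro sum.cong refl) (simp add: f_def)
  also have "\<dots> = (\<Sum>(a, \<beta>)\<in>(SIGMA a:{0..t}. weak_compositions (length xs) (t - a)). f (a # \<beta>))"
    by (rule sum.Sigma) (auto simp: finite_weak_compositions)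
  also have "\<dots> = sum f (weak_compositions (length (x # xs)) t)"
    by (simp add: weak_compositions_Suc sum.reindex inj_on_def case_prod_beta')
  finally show ?case by (simp add: f_def)
qed

lemma sum_partitions_monomial_sym:
  fixes W :: "nat multiset \<Rightarrow> complex"
  shows "(\<Sum>la\<in>{la\<in>partitions_of t. size la \<le> length xs}. W la * monomial_sym la xs) =
    (\<Sum>\<alpha>\<in>weak_compositions (length xs) t. W (partition_of \<alpha>) * list_monomial xs \<alpha>)"
proof -
  define L where "L = {la\<in>partitions_of t. size la \<le> length xs}"
  have "a \<le> t" if "la \<in> L" "a \<in># la" for la a
    using that sum_mset.remove[OF that(2)] by (auto simp: L_def partitions_of_def)
  then have "L \<subseteq> (\<Union>k\<le>length xs. multisets_of_size {..t} k)"
    by (auto simp: L_def multisets_of_size_def)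
  then have "finite L" by (rule finite_subset) auto
  moreover have "partition_of ` weak_compositions (length xs) t \<subseteq> L"
  proof (rule image_subsetI)
    fix \<alpha> assume "\<alpha> \<in> weak_compositions (length xs) t"
    then show "partition_of \<alpha> \<in> L"
      using size_partition_of_le[of \<alpha>]
      by (auto simp: L_def partitions_of_def weak_compositions_def in_partition_of_pos)
  qed
  ultimately have "(\<Sum>\<alpha>\<in>weak_compositions (length xs) t. W (partition_of \<alpha>) * list_monomial xs \<alpha>) =
      (\<Sum>la\<in>L. \<Sum>\<alpha>\<in>{\<alpha>\<in>weak_compositions (length xs) t. partition_of \<alpha> = la}.
         W (partition_of \<alpha>) * list_monomial xs \<alpha>)"
    by (rule sum.group[OF finite_weak_compositions, symmetric])
  also have "\<dots> = (\<Sum>la\<in>L. W la * monomial_sym la xs)"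
  proof (rule sum.cong[OF refl])
    fix la assume "la \<in> L"
    then have fibre: "{\<alpha>\<in>weak_compositions (length xs) t. partition_of \<alpha> = la} =
        {\<alpha>. length \<alpha> = length xs \<and> mset (filter (\<lambda>a. a \<noteq> 0) \<alpha>) = la}"
      by (auto simp: L_def partitions_of_def weak_compositions_def partition_of_def
          simp flip: sum_mset_partition_of)
    have "(\<Sum>\<alpha>\<in>{\<alpha>\<in>weak_compositions (length xs) t. partition_of \<alpha> = la}.
        W (partition_of \<alpha>) * list_monomial xs \<alpha>) =
        (\<Sum>\<alpha>\<in>{\<alpha>\<in>weak_compositions (length xs) t. partition_of \<alpha> = la}. W la * list_monomial xs \<alpha>)"
      by (rule sum.cong) auto
    also have "\<dots> = W la * monomial_sym la xs"
      unfolding fibre by (simp add: monomial_sym_def list_monomial_def sum_distrib_left)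
    finally show "(\<Sum>\<alpha>\<in>{\<alpha>\<in>weak_compositions (length xs) t. partition_of \<alpha> = la}.
        W (partition_of \<alpha>) * list_monomial xs \<alpha>) = W la * monomial_sym la xs" .
  qed
  finally show ?thesis by (simp add: L_def)
qed

lemma p_q_eq_sum_weak_compositions:
  assumes "t > 0" and "q \<noteq> 0"
  shows "(q - inverse q) * p_q q t xs =
    (\<Sum>\<alpha>\<in>weak_compositions (length xs) t.
       (inverse q * (q - inverse q)) ^ size (partition_of \<alpha>) * list_monomial xs \<alpha>)"
proof -
  have weight: "(q - inverse q) * (q powi - int (size (partition_of \<alpha>)) *
      (q - inverse q) ^ (size (partition_of \<alpha>) - 1)) =
      (inverse q * (q - inverse q)) ^ size (partition_of \<alpha>)"
    if "\<alpha> \<in> weak_compositions (length xs) t" for \<alpha>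
  proof -
    have "sum_mset (partition_of \<alpha>) = t" using that by (simp add: weak_compositions_def)
    with \<open>t > 0\<close> obtain k where k: "size (partition_of \<alpha>) = Suc k"
      by (metis gr0_implies_Suc nonempty_has_size sum_mset.empty less_irrefl)
    have "q powi - int (Suc k) = inverse q ^ Suc k"
      by (simp only: power_int_minus power_int_of_nat power_inverse)
    then show ?thesis
      unfolding k by (simp only: power_mult_distrib diff_Suc_1 power_Suc mult_ac)
  qed
  show ?thesis
    unfolding p_q_def sum_partitions_monomial_sym sum_distrib_left
    by (rule sum.cong[OF refl]) (metis weight mult.assoc)
qed

lemma prod_geom_fps_nth_0 [simp]: "(\<Prod>x\<leftarrow>xs. geom_fps d x) $ 0 = 1"
  by (induction xs) simp_all

lemma coeff_prod_geom_fps_eq_p_q: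
  assumes "t > 0" and "q \<noteq> 0"
  shows "(\<Prod>x\<leftarrow>xs. geom_fps (inverse q * (q - inverse q)) x) $ t = (q - inverse q) * p_q q t xs"
  by (simp add: coeff_prod_geom_fps p_q_eq_sum_weak_compositions assms)

text \<open>With d = q^-1 (q - q^-1) the dilation factor 1 - d is q^-2, which is not a root of unity.\<close>
lemma reciprocal_root_poly_eq_if_p_q_eq:
  fixes q :: complex
  assumes "q \<noteq> 0" and "\<not> root_of_unity q" and p_q_eq: "\<And>t. t > 0 \<Longrightarrow> p_q q t xs = p_q q t ys"
  shows "reciprocal_root_poly xs = reciprocal_root_poly ys"
proof -
  define d where "d = inverse q * (q - inverse q)"
  define c where "c = 1 - d"
  have c: "c = inverse q ^ 2"
    using \<open>q \<noteq> 0\<close> by (simp add: c_def d_def field_simps power2_eq_square)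
  have "c \<noteq> 0" using \<open>q \<noteq> 0\<close> by (simp add: c)
  have no_root: "c ^ k \<noteq> 1" if "k > 0" for k
  proof
    assume "c ^ k = 1"
    then have "q ^ (2 * k) = 1"
      by (simp add: c power_mult power_inverse)
    with \<open>k > 0\<close> \<open>\<not> root_of_unity q\<close> show False
      unfolding root_of_unity_def by (metis mult_pos_pos zero_less_numeral)
  qed
  let ?E = "\<lambda>xs. \<Prod>x\<leftarrow>xs. geom_fps d x"
  have "?E xs = ?E ys"
  proof (rule fps_ext)
    fix t show "?E xs $ t = ?E ys $ t"
      using p_q_eq[of t] \<open>q \<noteq> 0\<close> by (cases "t = 0") (simp_all add: d_def coeff_prod_geom_fps_eq_p_q)
  qed
  have dilation: "fps_of_poly (pcompose (reciprocal_root_poly zs) [:0, c:]) =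
      fps_of_poly (reciprocal_root_poly zs) * ?E zs" for zs
    by (simp only: pcompose_reciprocal_root_poly reciprocal_root_poly_times_prod_geom_fps c_def)
  have "fps_of_poly (pcompose (reciprocal_root_poly xs) [:0, c:] * reciprocal_root_poly ys) =
      fps_of_poly (reciprocal_root_poly xs) * ?E xs * fps_of_poly (reciprocal_root_poly ys)"
    by (simp only: fps_of_poly_mult dilation)
  also have "\<dots> = fps_of_poly (reciprocal_root_poly ys) * ?E ys * fps_of_poly (reciprocal_root_poly xs)"
    by (simp only: \<open>?E xs = ?E ys\<close> mult_ac)
  also have "\<dots> = fps_of_poly (pcompose (reciprocal_root_poly ys) [:0, c:] * reciprocal_root_poly xs)"
    by (simp only: fps_of_poly_mult dilation)
  finally have "pcompose (reciprocal_root_poly xs) [:0, c:] * reciprocal_root_poly ys =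
      pcompose (reciprocal_root_poly ys) [:0, c:] * reciprocal_root_poly xs"
    by (simp only: fps_of_poly_eq_iff)
  then show ?thesis
    using \<open>c \<noteq> 0\<close> no_root by (rule dilation_cross_eq_imp_eq) simp_all
qed

section \<open>Injectivity\<close>

lemma root_list_decomp: "\<phi> = smult (lead_coeff \<phi>) (\<Prod>g\<leftarrow>root_list \<phi>. [:-g, 1:])"
proof -
  obtain gs where "mset gs = proots \<phi>"
    using ex_mset by blast
  then have "\<phi> = smult (lead_coeff \<phi>) (\<Prod>g\<leftarrow>gs. [:-g, 1:])"
    using complex_poly_decompose_multiset[of \<phi>] by (simp flip: prod_mset_prod_list)
  then show ?thesis
    unfolding root_list_def by (rule someI)
qed

lemma fst_u0: "fst (u0 q \<phi>) = lead_coeff \<phi> * q ^ length (root_list \<phi>)"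
  by (simp add: u0_def Let_def)

lemma snd_u0: "root_list \<phi> \<noteq> [] \<Longrightarrow> t > 0 \<Longrightarrow> snd (u0 q \<phi>) t = p_q q t (root_list \<phi>)"
  by (simp add: u0_def Let_def)

lemma power_inj_if_not_root_of_unity:
  assumes "q \<noteq> 0" and "\<not> root_of_unity q" and "q ^ m = q ^ n"
  shows "m = n"
proof -
  have False if "i < j" and "q ^ i = q ^ j" for i j
  proof -
    have "q ^ i * q ^ (j - i) = q ^ j"
      using \<open>i < j\<close> by (simp flip: power_add)
    then have "q ^ (j - i) = 1" using \<open>q ^ i = q ^ j\<close> \<open>q \<noteq> 0\<close> by simp
    with \<open>i < j\<close> assms(2) show False unfolding root_of_unity_def by (meson zero_less_diff)
  qed
  then show ?thesis using assms(3) by (metis linorder_neqE_nat)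
qed

text \<open>Squaring removes the signs b, b' = +-1.\<close>
lemma sign_times_power_inj:
  fixes q b b' :: complex
  assumes "q \<noteq> 0" and "\<not> root_of_unity q" and "b \<in> {1, -1}" and "b' \<in> {1, -1}"
    and eq: "b * q ^ k = b' * q ^ l"
  shows "k = l" and "b = b'"
proof -
  have "(b * q ^ k)\<^sup>2 = (b' * q ^ l)\<^sup>2" by (simp only: eq)
  with assms(3,4) have "q ^ (k * 2) = q ^ (l * 2)"
    by (auto simp only: power_mult power_mult_distrib insert_iff empty_iff power2_minus power_one
        mult_1_left)
  then show "k = l"
    using power_inj_if_not_root_of_unity[OF assms(1,2)] by (metis mult_right_cancel zero_neq_numeral)
  with eq \<open>q \<noteq> 0\<close> show "b = b'" by simp
qed

theorem mainTheorem15: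
  fixes q :: complex
  assumes "q \<noteq> 0" and "\<not> root_of_unity q"
  shows "inj_on (u0 q) Cx0"
proof (rule inj_onI)
  fix \<phi> \<psi> assume "\<phi> \<in> Cx0" "\<psi> \<in> Cx0" and u0_eq: "u0 q \<phi> = u0 q \<psi>"
  let ?gs = "root_list \<phi>" and ?hs = "root_list \<psi>"
  have "length ?gs = length ?hs" and lead: "lead_coeff \<phi> = lead_coeff \<psi>"
    using sign_times_power_inj[OF assms, of "lead_coeff \<phi>" "lead_coeff \<psi>"]
      \<open>\<phi> \<in> Cx0\<close> \<open>\<psi> \<in> Cx0\<close> arg_cong[OF u0_eq, of fst]
    by (auto simp: Cx0_def fst_u0)
  have "reciprocal_root_poly ?gs = reciprocal_root_poly ?hs"
  proof (cases "?gs = []")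
    case False
    with \<open>length ?gs = length ?hs\<close> have "?hs \<noteq> []" by auto
    have "p_q q t ?gs = p_q q t ?hs" if "t > 0" for t
      using snd_u0[where q = q, OF False that] snd_u0[where q = q, OF \<open>?hs \<noteq> []\<close> that] u0_eq
      by simp
    then show ?thesis using assms by (rule reciprocal_root_poly_eq_if_p_q_eq[rotated 2])
  qed (use \<open>length ?gs = length ?hs\<close> in simp)
  then have roots: "(\<Prod>g\<leftarrow>?gs. [:-g, 1:]) = (\<Prod>g\<leftarrow>?hs. [:-g, 1:])"
    using \<open>length ?gs = length ?hs\<close> by (intro root_prod_eq_if_reciprocal_root_poly_eq)
  have "\<phi> = smult (lead_coeff \<phi>) (\<Prod>g\<leftarrow>?gs. [:-g, 1:])" by (rule root_list_decomp)
  also have "\<dots> = smult (lead_coeff \<psi>) (\<Prod>g\<leftarrow>?hs. [:-g, 1:])" by (simp only: lead roots)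
  also have "\<dots> = \<psi>" by (rule root_list_decomp[symmetric])
  finally show "\<phi> = \<psi>" .
qed

end
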